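(* Let the finite algebra be $M_{N_i}(\mathbb{C}) \oplus M_{N_j}(\mathbb{C})$ and let the finite Hilbert space of a real, even finite spectral triple of KO-dimension $6$ consist of two building blocks $\mathcal{B}_i$ and $\mathcal{B}_j$ of the first type (i.e. two copies $M_{N_i}(\mathbb{C})_L\oplus M_{N_i}(\mathbb{C})_R$ and $M_{N_j}(\mathbb{C})_L\oplus M_{N_j}(\mathbb{C})_R$ of the adjoint representations, with opposite grading), together with the representation $\mathbf{N}_i\otimes\mathbf{N}_j^o$ (grading $+$) and its conjugate $\mathbf{N}_j\otimes\mathbf{N}_i^o$ (grading $-$). Then on the basis $$\mathbf{N}_i\otimes\mathbf{N}_j^o \oplus M_{N_i}(\mathbb{C})_L \oplus M_{N_i}(\mathbb{C})_R \oplus M_{N_j}(\mathbb{C})_L \oplus M_{N_j}(\mathbb{C})_R \oplus \mathbf{N}_j\otimes\mathbf{N}_i^o$$ the most general finite Dirac operator is $$D_F = \begin{pmatrix} 0 & 0 & A & 0 & B & 0\\ 0 & 0 & M_i & 0 & 0 & JA^*J^*\\ A^* & M_i^* & 0 & 0 & 0 & 0\\ 0 & 0 & 0 & 0 & M_j & JB^*J^*\\ B^* & 0 & 0 & M_j^* & 0 & 0\\ 0 & JAJ^* & 0 & JBJ^* & 0 & 0 \end{pmatrix}$$ with $A : M_{N_i}(\mathbb{C})_R \to \mathbf{N}_i\otimes\mathbf{N}_j^o$ and $B : M_{N_j}(\mathbb{C})_R \to \mathbf{N}_i\otimes\mathbf{N}_j^o$, and $M_i$, $M_j$ maps between the two copies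 of the respective adjoint representations.
   Context: $D_F$ is required to be self-adjoint, to anticommute with the grading $\gamma_F$, to commute with the real structure $J_F$ (which interchanges the $L$ and $R$ copies while taking adjoints, $J_F(m,n)=(n^*,m^* )$, and maps $\mathbf{N}_i\otimes\mathbf{N}_j^o$ to its conjugate), and to satisfy the first-order condition $[[D_F,a],Jb J^{-1}]=0$ for all $a,b$ in the algebra. *)

theory Defs
  imports Complex_Main
begin

text \<open>Complex matrices indexed by finite types: an 'a x 'b matrix is a function
  'a => 'b => complex. N_i = CARD('i), N_j = CARD('j).\<close>

type_synonym ('a,'b) cmat = "'a \<Rightarrow> 'b \<Rightarrow> complex"

definition madd :: "('a,'b) cmat \<Rightarrow> ('a,'b) cmat \<Rightarrow> ('a,'b) cmat" where
  "madd x y = (\<lambda>r s. x r s + y r s)"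

definition msc :: "complex \<Rightarrow> ('a,'b) cmat \<Rightarrow> ('a,'b) cmat" where
  "msc c x = (\<lambda>r s. c * x r s)"

definition mzero :: "('a,'b) cmat" where
  "mzero = (\<lambda>r s. 0)"

definition mmul :: "('a,'b::finite) cmat \<Rightarrow> ('b,'c) cmat \<Rightarrow> ('a,'c) cmat" where
  "mmul x y = (\<lambda>r t. \<Sum>s\<in>UNIV. x r s * y s t)"

definition madj :: "('a,'b) cmat \<Rightarrow> ('b,'a) cmat" where
  "madj x = (\<lambda>r s. cnj (x s r))"

definition hs :: "('a::finite,'b::finite) cmat \<Rightarrow> ('a,'b) cmat \<Rightarrow> complex" where
  "hs x y = (\<Sum>r\<in>UNIV. \<Sum>s\<in>UNIV. cnj (x r s) * y r s)"

definition is_adjoint ::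
  "(('a::finite,'b::finite) cmat \<Rightarrow> ('c::finite,'d::finite) cmat) \<Rightarrow> (('c,'d) cmat \<Rightarrow> ('a,'b) cmat) \<Rightarrow> bool" where
  "is_adjoint T S \<longleftrightarrow> (\<forall>x y. hs (T x) y = hs x (S y))"

text \<open>The finite Hilbert space
  N_i (x) N_j^o  +  M_{N_i}(C)_L + M_{N_i}(C)_R + M_{N_j}(C)_L + M_{N_j}(C)_R + N_j (x) N_i^o,
  in this order.\<close>

datatype ('i,'j) hilb =
  H (cij: "('i,'j) cmat") (ciL: "('i,'i) cmat") (ciR: "('i,'i) cmat")
    (cjL: "('j,'j) cmat") (cjR: "('j,'j) cmat") (cji: "('j,'i) cmat")

definition hadd :: "('i,'j) hilb \<Rightarrow> ('i,'j) hilb \<Rightarrow> ('i,'j) hilb" where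
  "hadd x y = H (madd (cij x) (cij y)) (madd (ciL x) (ciL y)) (madd (ciR x) (ciR y))
                (madd (cjL x) (cjL y)) (madd (cjR x) (cjR y)) (madd (cji x) (cji y))"

definition hscale :: "complex \<Rightarrow> ('i,'j) hilb \<Rightarrow> ('i,'j) hilb" where
  "hscale c x = H (msc c (cij x)) (msc c (ciL x)) (msc c (ciR x))
                  (msc c (cjL x)) (msc c (cjR x)) (msc c (cji x))"

definition hsub :: "('i,'j) hilb \<Rightarrow> ('i,'j) hilb \<Rightarrow> ('i,'j) hilb" where
  "hsub x y = hadd x (hscale (-1) y)"

definition hzero :: "('i,'j) hilb" where
  "hzero = H mzero mzero mzero mzero mzero mzero"

definition hinner :: "('i::finite,'j::finite) hilb \<Rightarrow> ('i,'j) hilb \<Rightarrow> complex" where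
  "hinner x y = hs (cij x) (cij y) + hs (ciL x) (ciL y) + hs (ciR x) (ciR y)
              + hs (cjL x) (cjL y) + hs (cjR x) (cjR y) + hs (cji x) (cji y)"

definition rep :: "('i::finite,'i) cmat \<times> ('j::finite,'j) cmat \<Rightarrow> ('i,'j) hilb \<Rightarrow> ('i,'j) hilb" where
  "rep ab x = (case ab of (a,b) \<Rightarrow>
     H (mmul a (cij x)) (mmul a (ciL x)) (mmul a (ciR x))
       (mmul b (cjL x)) (mmul b (cjR x)) (mmul b (cji x)))"

text \<open>Real structure: J(m,n) = (n^*,m^*) on each adjoint building block, and
  N_i (x) N_j^o <-> N_j (x) N_i^o via m |-> m^*.  J^2 = 1, so J^{-1} = J^* = J.\<close>
definition Jop :: "('i,'j) hilb \<Rightarrow> ('i,'j) hilb" where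
  "Jop x = H (madj (cji x)) (madj (ciR x)) (madj (ciL x))
             (madj (cjR x)) (madj (cjL x)) (madj (cij x))"

definition gam :: "('i,'j) hilb \<Rightarrow> ('i,'j) hilb" where
  "gam x = H (cij x) (ciL x) (msc (-1) (ciR x)) (cjL x) (msc (-1) (cjR x)) (msc (-1) (cji x))"

definition comm :: "(('i,'j) hilb \<Rightarrow> ('i,'j) hilb) \<Rightarrow> (('i,'j) hilb \<Rightarrow> ('i,'j) hilb)
                    \<Rightarrow> ('i,'j) hilb \<Rightarrow> ('i,'j) hilb" where
  "comm S T = (\<lambda>x. hsub (S (T x)) (T (S x)))"

definition is_linear_op :: "(('i,'j) hilb \<Rightarrow> ('i,'j) hilb) \<Rightarrow> bool" where
  "is_linear_op D \<longleftrightarrow> (\<forall>x y. D (hadd x y) = hadd (D x) (D y)) \<and> (\<forall>c x. D (hscale c x) = hscale c (D x))"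

definition finite_dirac :: "(('i::finite,'j::finite) hilb \<Rightarrow> ('i,'j) hilb) \<Rightarrow> bool" where
  "finite_dirac D \<longleftrightarrow>
     is_linear_op D
   \<and> (\<forall>x y. hinner (D x) y = hinner x (D y))
   \<and> (\<forall>x. hadd (D (gam x)) (gam (D x)) = hzero)
   \<and> (\<forall>x. D (Jop x) = Jop (D x))
   \<and> (\<forall>a b x. comm (comm D (rep a)) (\<lambda>y. Jop (rep b (Jop y))) x = hzero)"

end

theory Submission
  imports Defs
begin

text \<open>Write D as a 6 x 6 block matrix. Anticommutation with the grading kills every block
  between two summands of equal parity. The first-order condition for the projections a = (1,0)
  and b = (0,1) kills every block between summands on which both the left action and the right
  action J b J^{-1} differ, i.e. N_i (x) N_j^o <-> N_j (x) N_i^o and M_{N_i}(C) <-> M_{N_j}(C).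
  Commutation with J writes the blocks involving N_j (x) N_i^o as J-conjugates of those
  involving N_i (x) N_j^o, and self-adjointness makes each remaining block the Hilbert--Schmidt
  adjoint of its mirror image.\<close>

definition mid :: "('a,'a) cmat" where
  "mid = (\<lambda>r s. of_bool (r = s))"

lemma mmul_mid_left [simp]: "mmul mid (m :: ('a::finite,'b) cmat) = m"
  by (simp add: mmul_def mid_def fun_eq_iff)

lemma mmul_mzero_left [simp]: "mmul mzero (m :: ('a::finite,'b) cmat) = mzero"
  by (simp add: mmul_def mzero_def fun_eq_iff)

lemma mmul_mzero_right [simp]: "mmul (m :: ('a,'b::finite) cmat) mzero = mzero"
  by (simp add: mmul_def mzero_def fun_eq_iff)

lemma madj_mzero [simp]: "madj mzero = mzero"
  by (simp add: madj_def mzero_def fun_eq_iff)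

lemma madj_madj [simp]: "madj (madj m) = m"
  by (simp add: madj_def fun_eq_iff)

lemma madd_mzero [simp]: "madd m mzero = m" "madd mzero m = m"
  by (simp_all add: madd_def mzero_def fun_eq_iff)

lemma msc_mzero [simp]: "msc c mzero = mzero"
  by (simp add: msc_def mzero_def fun_eq_iff)

lemma hs_mzero [simp]: "hs mzero m = 0" "hs m mzero = 0"
  by (simp_all add: hs_def mzero_def)

lemma msc_eq_mzero_iff [simp]: "msc c m = mzero \<longleftrightarrow> c = 0 \<or> m = mzero"
  by (auto simp: msc_def mzero_def fun_eq_iff)

lemma madd_self_eq_mzero_iff: "madd m m = mzero \<longleftrightarrow> m = mzero"
  by (auto simp: madd_def mzero_def fun_eq_iff)

lemma madd_neg_self_eq_mzero_iff: "madd (msc (-1) m) (msc (-1) m) = mzero \<longleftrightarrow> m = mzero"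
  by (auto simp: madd_def msc_def mzero_def fun_eq_iff)

lemma hilb_eqI:
  "cij x = cij y \<Longrightarrow> ciL x = ciL y \<Longrightarrow> ciR x = ciR y \<Longrightarrow>
   cjL x = cjL y \<Longrightarrow> cjR x = cjR y \<Longrightarrow> cji x = cji y \<Longrightarrow> x = y"
  by (cases x; cases y) auto

lemma hilb_sel [simp]:
  "cij (hadd x y) = madd (cij x) (cij y)" "ciL (hadd x y) = madd (ciL x) (ciL y)"
  "ciR (hadd x y) = madd (ciR x) (ciR y)" "cjL (hadd x y) = madd (cjL x) (cjL y)"
  "cjR (hadd x y) = madd (cjR x) (cjR y)" "cji (hadd x y) = madd (cji x) (cji y)"
  "cij (hscale c x) = msc c (cij x)" "ciL (hscale c x) = msc c (ciL x)"
  "ciR (hscale c x) = msc c (ciR x)" "cjL (hscale c x) = msc c (cjL x)"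
  "cjR (hscale c x) = msc c (cjR x)" "cji (hscale c x) = msc c (cji x)"
  "cij hzero = mzero" "ciL hzero = mzero" "ciR hzero = mzero"
  "cjL hzero = mzero" "cjR hzero = mzero" "cji hzero = mzero"
  "cij (gam x) = cij x" "ciL (gam x) = ciL x" "ciR (gam x) = msc (-1) (ciR x)"
  "cjL (gam x) = cjL x" "cjR (gam x) = msc (-1) (cjR x)" "cji (gam x) = msc (-1) (cji x)"
  "cij (Jop x) = madj (cji x)" "ciL (Jop x) = madj (ciR x)" "ciR (Jop x) = madj (ciL x)"
  "cjL (Jop x) = madj (cjR x)" "cjR (Jop x) = madj (cjL x)" "cji (Jop x) = madj (cij x)"
  by (simp_all add: hadd_def hscale_def hzero_def gam_def Jop_def)

lemma rep_sel [simp]: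
  "cij (rep (a,b) x) = mmul a (cij x)" "ciL (rep (a,b) x) = mmul a (ciL x)"
  "ciR (rep (a,b) x) = mmul a (ciR x)" "cjL (rep (a,b) x) = mmul b (cjL x)"
  "cjR (rep (a,b) x) = mmul b (cjR x)" "cji (rep (a,b) x) = mmul b (cji x)"
  by (simp_all add: rep_def)

lemma hsub_sel [simp]:
  "cij (hsub x y) = madd (cij x) (msc (-1) (cij y))" "ciL (hsub x y) = madd (ciL x) (msc (-1) (ciL y))"
  "ciR (hsub x y) = madd (ciR x) (msc (-1) (ciR y))" "cjL (hsub x y) = madd (cjL x) (msc (-1) (cjL y))"
  "cjR (hsub x y) = madd (cjR x) (msc (-1) (cjR y))" "cji (hsub x y) = madd (cji x) (msc (-1) (cji y))"
  by (simp_all add: hsub_def)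

lemma hilb_eq_hzero_iff:
  "x = hzero \<longleftrightarrow> cij x = mzero \<and> ciL x = mzero \<and> ciR x = mzero \<and>
                  cjL x = mzero \<and> cjR x = mzero \<and> cji x = mzero"
  by (cases x) (auto simp: hzero_def)

definition in_ij :: "('i,'j) cmat \<Rightarrow> ('i,'j) hilb" where
  "in_ij m = H m mzero mzero mzero mzero mzero"
definition in_iL :: "('i,'i) cmat \<Rightarrow> ('i,'j) hilb" where
  "in_iL m = H mzero m mzero mzero mzero mzero"
definition in_iR :: "('i,'i) cmat \<Rightarrow> ('i,'j) hilb" where
  "in_iR m = H mzero mzero m mzero mzero mzero"
definition in_jL :: "('j,'j) cmat \<Rightarrow> ('i,'j) hilb" where
  "in_jL m = H mzero mzero mzero m mzero mzero"
definition in_jR :: "('j,'j) cmat \<Rightarrow> ('i,'j) hilb" where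
  "in_jR m = H mzero mzero mzero mzero m mzero"
definition in_ji :: "('j,'i) cmat \<Rightarrow> ('i,'j) hilb" where
  "in_ji m = H mzero mzero mzero mzero mzero m"

lemmas in_block_defs = in_ij_def in_iL_def in_iR_def in_jL_def in_jR_def in_ji_def

lemma in_block_sel [simp]:
  "cij (in_ij m) = m" "ciL (in_ij m) = mzero" "ciR (in_ij m) = mzero"
  "cjL (in_ij m) = mzero" "cjR (in_ij m) = mzero" "cji (in_ij m) = mzero"
  "cij (in_iL n) = mzero" "ciL (in_iL n) = n" "ciR (in_iL n) = mzero"
  "cjL (in_iL n) = mzero" "cjR (in_iL n) = mzero" "cji (in_iL n) = mzero"
  "cij (in_iR n) = mzero" "ciL (in_iR n) = mzero" "ciR (in_iR n) = n"
  "cjL (in_iR n) = mzero" "cjR (in_iR n) = mzero" "cji (in_iR n) = mzero"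
  "cij (in_jL k) = mzero" "ciL (in_jL k) = mzero" "ciR (in_jL k) = mzero"
  "cjL (in_jL k) = k" "cjR (in_jL k) = mzero" "cji (in_jL k) = mzero"
  "cij (in_jR k) = mzero" "ciL (in_jR k) = mzero" "ciR (in_jR k) = mzero"
  "cjL (in_jR k) = mzero" "cjR (in_jR k) = k" "cji (in_jR k) = mzero"
  "cij (in_ji p) = mzero" "ciL (in_ji p) = mzero" "ciR (in_ji p) = mzero"
  "cjL (in_ji p) = mzero" "cjR (in_ji p) = mzero" "cji (in_ji p) = p"
  by (simp_all add: in_block_defs)

lemma hilb_block_decomp:
  "x = hadd (in_ij (cij x)) (hadd (in_iL (ciL x)) (hadd (in_iR (ciR x))
         (hadd (in_jL (cjL x)) (hadd (in_jR (cjR x)) (in_ji (cji x))))))"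
  by (rule hilb_eqI) simp_all

lemma Jop_in_block [simp]:
  "Jop (in_ij m) = in_ji (madj m)" "Jop (in_iL n) = in_iR (madj n)" "Jop (in_iR n) = in_iL (madj n)"
  "Jop (in_jL k) = in_jR (madj k)" "Jop (in_jR k) = in_jL (madj k)" "Jop (in_ji p) = in_ij (madj p)"
  by (simp_all add: Jop_def in_block_defs)

lemma Jop_hzero [simp]: "Jop hzero = hzero"
  by (simp add: Jop_def hzero_def)

lemma rep_hzero [simp]: "rep ab hzero = hzero"
  by (cases ab) (simp add: rep_def hzero_def)

lemma rep_in_block [simp]:
  "rep (a,b) (in_ij m) = in_ij (mmul a m)" "rep (a,b) (in_iL n) = in_iL (mmul a n)"
  "rep (a,b) (in_iR n) = in_iR (mmul a n)" "rep (a,b) (in_jL k) = in_jL (mmul b k)"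
  "rep (a,b) (in_jR k) = in_jR (mmul b k)" "rep (a,b) (in_ji p) = in_ji (mmul b p)"
  by (simp_all add: rep_def in_block_defs)

lemma in_block_mzero [simp]:
  "in_ij mzero = hzero" "in_iL mzero = hzero" "in_iR mzero = hzero"
  "in_jL mzero = hzero" "in_jR mzero = hzero" "in_ji mzero = hzero"
  by (simp_all add: in_block_defs hzero_def)

lemma gam_in_block:
  "gam (in_ij m) = in_ij m" "gam (in_iL n) = in_iL n" "gam (in_jL k) = in_jL k"
  "gam (in_iR n) = hscale (-1) (in_iR n)" "gam (in_jR k) = hscale (-1) (in_jR k)"
  "gam (in_ji p) = hscale (-1) (in_ji p)"
  by (simp_all add: gam_def hscale_def in_block_defs)

lemma hinner_in_block:
  "hinner (in_ij m) y = hs m (cij y)" "hinner (in_iL n) y = hs n (ciL y)"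
  "hinner (in_iR n) y = hs n (ciR y)" "hinner (in_jL k) y = hs k (cjL y)"
  "hinner (in_jR k) y = hs k (cjR y)" "hinner (in_ji p) y = hs p (cji y)"
  "hinner y (in_ij m) = hs (cij y) m" "hinner y (in_iL n) = hs (ciL y) n"
  "hinner y (in_iR n) = hs (ciR y) n" "hinner y (in_jL k) = hs (cjL y) k"
  "hinner y (in_jR k) = hs (cjR y) k" "hinner y (in_ji p) = hs (cji y) p"
  by (simp_all add: hinner_def)

lemma finite_dirac_hzero:
  assumes "finite_dirac D" shows "D hzero = hzero"
proof -
  have "hscale 0 x = hzero" for x :: "('a,'b) hilb"
    by (simp add: hscale_def hzero_def msc_def mzero_def)
  with assms show ?thesis
    unfolding finite_dirac_def is_linear_op_def by metis
qed

lemma finite_dirac_block_sum: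
  assumes "finite_dirac D"
  shows "D x = hadd (D (in_ij (cij x))) (hadd (D (in_iL (ciL x))) (hadd (D (in_iR (ciR x)))
                 (hadd (D (in_jL (cjL x))) (hadd (D (in_jR (cjR x))) (D (in_ji (cji x)))))))"
proof -
  have additive: "D (hadd y z) = hadd (D y) (D z)" for y z
    using assms by (simp add: finite_dirac_def is_linear_op_def)
  show ?thesis
    by (subst hilb_block_decomp) (simp only: additive)
qed

lemma finite_dirac_even_to_odd:
  assumes "finite_dirac D" and "gam x = x"
  shows "cij (D x) = mzero \<and> ciL (D x) = mzero \<and> cjL (D x) = mzero"
proof -
  have "hadd (D x) (gam (D x)) = hzero"
    using assms unfolding finite_dirac_def by metis
  then show ?thesis
    by (simp add: hilb_eq_hzero_iff madd_self_eq_mzero_iff)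
qed

lemma finite_dirac_odd_to_even:
  assumes "finite_dirac D" and "gam x = hscale (-1) x"
  shows "ciR (D x) = mzero \<and> cjR (D x) = mzero \<and> cji (D x) = mzero"
proof -
  have "D (gam x) = hscale (-1) (D x)"
    using assms unfolding finite_dirac_def is_linear_op_def by metis
  moreover have "hadd (D (gam x)) (gam (D x)) = hzero"
    using assms unfolding finite_dirac_def by metis
  ultimately show ?thesis
    by (simp add: hilb_eq_hzero_iff madd_neg_self_eq_mzero_iff)
qed

text \<open>For P = rep (1,0) and Q = J rep (0,1) J, the block of [[D,P],Q] from a summand on which
  P, Q act as p, q into one on which they act as p', q' is (p - p') (q - q') times the
  corresponding block of D.\<close>

lemma finite_dirac_first_order_blocks:
  fixes D :: "('i::finite,'j::finite) hilb \<Rightarrow> ('i,'j) hilb"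
  assumes "finite_dirac D"
  shows "cji (D (in_ij m)) = mzero" "cij (D (in_ji p)) = mzero"
    and "cjR (D (in_iL n)) = mzero" "cjL (D (in_iR n)) = mzero"
    and "ciR (D (in_jL k)) = mzero" "ciL (D (in_jR k)) = mzero"
proof -
  define P :: "('i,'j) hilb \<Rightarrow> ('i,'j) hilb" where "P = rep (mid, mzero)"
  define Q :: "('i,'j) hilb \<Rightarrow> ('i,'j) hilb" where "Q = (\<lambda>y. Jop (rep (mzero, mid) (Jop y)))"
  have "comm (comm D P) Q x = hzero" for x
    using assms unfolding finite_dirac_def P_def Q_def by blast
  then have first_order:
    "hsub (hsub (D (P (Q x))) (P (D (Q x)))) (Q (hsub (D (P x)) (P (D x)))) = hzero" for x
    by (simp only: comm_def)
  have [simp]: "D hzero = hzero"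
    using assms by (rule finite_dirac_hzero)
  show "cji (D (in_ij m)) = mzero" "cij (D (in_ji p)) = mzero"
    "cjR (D (in_iL n)) = mzero" "cjL (D (in_iR n)) = mzero"
    "ciR (D (in_jL k)) = mzero" "ciL (D (in_jR k)) = mzero"
    using arg_cong[OF first_order[of "in_ij m"], of cji] arg_cong[OF first_order[of "in_ji p"], of cij]
      arg_cong[OF first_order[of "in_iL n"], of cjR] arg_cong[OF first_order[of "in_iR n"], of cjL]
      arg_cong[OF first_order[of "in_jL k"], of ciR] arg_cong[OF first_order[of "in_jR k"], of ciL]
    by (simp_all add: P_def Q_def)
qed

lemma finite_dirac_Jop_blocks:
  assumes "finite_dirac D"
  shows "ciL (D (in_ji p)) = madj (ciR (D (in_ij (madj p))))"
    and "cjL (D (in_ji p)) = madj (cjR (D (in_ij (madj p))))"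
    and "cji (D (in_iL n)) = madj (cij (D (in_iR (madj n))))"
    and "cji (D (in_jL k)) = madj (cij (D (in_jR (madj k))))"
proof -
  have J: "D (Jop x) = Jop (D x)" for x
    using assms unfolding finite_dirac_def by blast
  show "ciL (D (in_ji p)) = madj (ciR (D (in_ij (madj p))))"
    "cjL (D (in_ji p)) = madj (cjR (D (in_ij (madj p))))"
    using J[of "in_ij (madj p)"] by simp_all
  show "cji (D (in_iL n)) = madj (cij (D (in_iR (madj n))))"
    using J[of "in_iR (madj n)"] by simp
  show "cji (D (in_jL k)) = madj (cij (D (in_jR (madj k))))"
    using J[of "in_jR (madj k)"] by simp
qed

lemma finite_dirac_is_adjoint_blocks:
  assumes "finite_dirac D"
  shows "is_adjoint (\<lambda>z. cij (D (in_iR z))) (\<lambda>z. ciR (D (in_ij z)))"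
    and "is_adjoint (\<lambda>z. cij (D (in_jR z))) (\<lambda>z. cjR (D (in_ij z)))"
    and "is_adjoint (\<lambda>z. ciL (D (in_iR z))) (\<lambda>z. ciR (D (in_iL z)))"
    and "is_adjoint (\<lambda>z. cjL (D (in_jR z))) (\<lambda>z. cjR (D (in_jL z)))"
proof -
  have "hinner (D x) y = hinner x (D y)" for x y
    using assms unfolding finite_dirac_def by blast
  then show "is_adjoint (\<lambda>z. cij (D (in_iR z))) (\<lambda>z. ciR (D (in_ij z)))"
    "is_adjoint (\<lambda>z. cij (D (in_jR z))) (\<lambda>z. cjR (D (in_ij z)))"
    "is_adjoint (\<lambda>z. ciL (D (in_iR z))) (\<lambda>z. ciR (D (in_iL z)))"
    "is_adjoint (\<lambda>z. cjL (D (in_jR z))) (\<lambda>z. cjR (D (in_jL z)))"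
    unfolding is_adjoint_def by (metis hinner_in_block)+
qed

lemma finite_dirac_block_form:
  fixes D :: "('i::finite,'j::finite) hilb \<Rightarrow> ('i,'j) hilb"
  assumes "finite_dirac D"
  shows "D x =
    H (madd (cij (D (in_iR (ciR x)))) (cij (D (in_jR (cjR x)))))
      (madd (ciL (D (in_iR (ciR x)))) (madj (ciR (D (in_ij (madj (cji x)))))))
      (madd (ciR (D (in_ij (cij x)))) (ciR (D (in_iL (ciL x)))))
      (madd (cjL (D (in_jR (cjR x)))) (madj (cjR (D (in_ij (madj (cji x)))))))
      (madd (cjR (D (in_ij (cij x)))) (cjR (D (in_jL (cjL x)))))
      (madd (madj (cij (D (in_iR (madj (ciL x)))))) (madj (cij (D (in_jR (madj (cjL x)))))))"
proof -
  note even = finite_dirac_even_to_odd[OF assms] and odd = finite_dirac_odd_to_even[OF assms]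
  have vanishing [simp]:
    "cij (D (in_ij m)) = mzero" "ciL (D (in_ij m)) = mzero" "cjL (D (in_ij m)) = mzero"
    "cij (D (in_iL n)) = mzero" "ciL (D (in_iL n)) = mzero" "cjL (D (in_iL n)) = mzero"
    "cij (D (in_jL k)) = mzero" "ciL (D (in_jL k)) = mzero" "cjL (D (in_jL k)) = mzero"
    "ciR (D (in_iR n)) = mzero" "cjR (D (in_iR n)) = mzero" "cji (D (in_iR n)) = mzero"
    "ciR (D (in_jR k)) = mzero" "cjR (D (in_jR k)) = mzero" "cji (D (in_jR k)) = mzero"
    "ciR (D (in_ji p)) = mzero" "cjR (D (in_ji p)) = mzero" "cji (D (in_ji p)) = mzero"
    for m n k p
    using even[of "in_ij m"] even[of "in_iL n"] even[of "in_jL k"]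
      odd[of "in_iR n"] odd[of "in_jR k"] odd[of "in_ji p"]
    by (simp_all add: gam_in_block)
  show ?thesis
    by (rule hilb_eqI; subst finite_dirac_block_sum[OF assms])
      (simp_all add: finite_dirac_first_order_blocks[OF assms] finite_dirac_Jop_blocks[OF assms])
qed

theorem mainTheorem2:
  fixes D :: "('i::finite,'j::finite) hilb \<Rightarrow> ('i,'j) hilb"
  assumes "finite_dirac D"
  shows "\<exists>(A :: ('i,'i) cmat \<Rightarrow> ('i,'j) cmat) As
           (B :: ('j,'j) cmat \<Rightarrow> ('i,'j) cmat) Bs
           (Mi :: ('i,'i) cmat \<Rightarrow> ('i,'i) cmat) Mis
           (Mj :: ('j,'j) cmat \<Rightarrow> ('j,'j) cmat) Mjs.
           is_adjoint A As \<and> is_adjoint B Bs \<and> is_adjoint Mi Mis \<and> is_adjoint Mj Mjs \<and>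
           (\<forall>x. D x =
              H (madd (A (ciR x)) (B (cjR x)))
                (madd (Mi (ciR x)) (madj (As (madj (cji x)))))
                (madd (As (cij x)) (Mis (ciL x)))
                (madd (Mj (cjR x)) (madj (Bs (madj (cji x)))))
                (madd (Bs (cij x)) (Mjs (cjL x)))
                (madd (madj (A (madj (ciL x)))) (madj (B (madj (cjL x))))))"
proof -
  define A :: "('i,'i) cmat \<Rightarrow> ('i,'j) cmat" where "A = (\<lambda>z. cij (D (in_iR z)))"
  define As where "As = (\<lambda>z. ciR (D (in_ij z)))"
  define B :: "('j,'j) cmat \<Rightarrow> ('i,'j) cmat" where "B = (\<lambda>z. cij (D (in_jR z)))"
  define Bs where "Bs = (\<lambda>z. cjR (D (in_ij z)))"
  define Mi where "Mi = (\<lambda>z. ciL (D (in_iR z)))"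
  define Mis where "Mis = (\<lambda>z. ciR (D (in_iL z)))"
  define Mj where "Mj = (\<lambda>z. cjL (D (in_jR z)))"
  define Mjs where "Mjs = (\<lambda>z. cjR (D (in_jL z)))"
  have "is_adjoint A As" "is_adjoint B Bs" "is_adjoint Mi Mis" "is_adjoint Mj Mjs"
    unfolding A_def As_def B_def Bs_def Mi_def Mis_def Mj_def Mjs_def
    using finite_dirac_is_adjoint_blocks[OF assms] by simp_all
  moreover have "D x =
      H (madd (A (ciR x)) (B (cjR x)))
        (madd (Mi (ciR x)) (madj (As (madj (cji x)))))
        (madd (As (cij x)) (Mis (ciL x)))
        (madd (Mj (cjR x)) (madj (Bs (madj (cji x)))))
        (madd (Bs (cij x)) (Mjs (cjL x)))
        (madd (madj (A (madj (ciL x)))) (madj (B (madj (cjL x)))))" for x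
    unfolding A_def As_def B_def Bs_def Mi_def Mis_def Mj_def Mjs_def
    by (rule finite_dirac_block_form[OF assms])
  ultimately show ?thesis
    by blast
qed

end
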